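(* Let $G$ be an infinite connected simple undirected graph with globally bounded vertex degree, $\deg(x)\le v<\infty$ for all vertices $x$, and suppose $G$ has internal scaling dimension $D$, i.e. $D_S(x)=D$ for every vertex $x$. Then the (unpurified) clique graph $G_{cl}$ also has internal scaling dimension $D$: for every clique $C$ of $G$, the limit $\lim_{n\to\infty}\ln(\#U^{cl}_n(C))/\ln n$ exists and equals $D$.
   Context: Graphs are simple and undirected with graph metric $d$ (minimal number of edges of a connecting path). For a vertex $x$, $U_n(x)=\{y:d(x,y)\le n\}$ and $D_n(x)=\ln(\#U_n(x))/\ln n$. The lower and upper internal scaling dimensions at $x$ are $\underline D_S(x)=\liminf_{n\to\infty}D_n(x)$ and $\overline D_S(x)=\limsup_{n\to\infty}D_n(x)$; if they coincide the common value is $D_S(x)$, and if $D_S(x)=D$ for all $x$ the graph has internal scaling dimension $D$. A clique is a maximal complete subgraph. The clique graph $G_{cl}$ has as vertices the cliques of $G$, two distinct cliques being adjacent iff they share at least one vertex; $U^{cl}_n(C)$ is the ball of radius $n$ around $C$ in the graph metric of $G_{cl}$. *)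

theory Defs
  imports Complex_Main "HOL-Library.Extended_Nat"
begin

definition simple_graph :: "'a set \<Rightarrow> ('a \<Rightarrow> 'a \<Rightarrow> bool) \<Rightarrow> bool" where
  "simple_graph V E \<longleftrightarrow> (\<forall>x y. E x y \<longrightarrow> x \<in> V \<and> y \<in> V \<and> x \<noteq> y \<and> E y x)"

inductive walk :: "'a set \<Rightarrow> ('a \<Rightarrow> 'a \<Rightarrow> bool) \<Rightarrow> 'a \<Rightarrow> 'a \<Rightarrow> nat \<Rightarrow> bool"
  for V E where
  walk_refl: "x \<in> V \<Longrightarrow> walk V E x x 0"
| walk_step: "E x z \<Longrightarrow> x \<in> V \<Longrightarrow> walk V E z y n \<Longrightarrow> walk V E x y (Suc n)"

text \<open>Graph metric: minimal number of edges of a connecting path (infinity if none).\<close>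
definition gdist :: "'a set \<Rightarrow> ('a \<Rightarrow> 'a \<Rightarrow> bool) \<Rightarrow> 'a \<Rightarrow> 'a \<Rightarrow> enat" where
  "gdist V E x y = (INF n \<in> {n. walk V E x y n}. enat n)"

definition connected_graph :: "'a set \<Rightarrow> ('a \<Rightarrow> 'a \<Rightarrow> bool) \<Rightarrow> bool" where
  "connected_graph V E \<longleftrightarrow> (\<forall>x\<in>V. \<forall>y\<in>V. gdist V E x y < \<infinity>)"

definition bounded_degree :: "'a set \<Rightarrow> ('a \<Rightarrow> 'a \<Rightarrow> bool) \<Rightarrow> bool" where
  "bounded_degree V E \<longleftrightarrow> (\<exists>v::nat. \<forall>x\<in>V. finite {y. E x y} \<and> card {y. E x y} \<le> v)"

definition gball :: "'a set \<Rightarrow> ('a \<Rightarrow> 'a \<Rightarrow> bool) \<Rightarrow> 'a \<Rightarrow> nat \<Rightarrow> 'a set" where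
  "gball V E x n = {y \<in> V. gdist V E x y \<le> enat n}"

definition Dn :: "'a set \<Rightarrow> ('a \<Rightarrow> 'a \<Rightarrow> bool) \<Rightarrow> 'a \<Rightarrow> nat \<Rightarrow> real" where
  "Dn V E x n = ln (real (card (gball V E x n))) / ln (real n)"

definition has_scaling_dim :: "'a set \<Rightarrow> ('a \<Rightarrow> 'a \<Rightarrow> bool) \<Rightarrow> real \<Rightarrow> bool" where
  "has_scaling_dim V E D \<longleftrightarrow> (\<forall>x\<in>V. (\<lambda>n. Dn V E x n) \<longlonglongrightarrow> D)"

definition complete_set :: "'a set \<Rightarrow> ('a \<Rightarrow> 'a \<Rightarrow> bool) \<Rightarrow> 'a set \<Rightarrow> bool" where
  "complete_set V E C \<longleftrightarrow> C \<subseteq> V \<and> (\<forall>x\<in>C. \<forall>y\<in>C. x \<noteq> y \<longrightarrow> E x y)"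

definition is_clique :: "'a set \<Rightarrow> ('a \<Rightarrow> 'a \<Rightarrow> bool) \<Rightarrow> 'a set \<Rightarrow> bool" where
  "is_clique V E C \<longleftrightarrow> complete_set V E C \<and>
     (\<forall>C'. complete_set V E C' \<and> C \<subseteq> C' \<longrightarrow> C' = C)"

definition cliques :: "'a set \<Rightarrow> ('a \<Rightarrow> 'a \<Rightarrow> bool) \<Rightarrow> 'a set set" where
  "cliques V E = {C. is_clique V E C}"

definition clique_adj :: "'a set \<Rightarrow> 'a set \<Rightarrow> bool" where
  "clique_adj C C' \<longleftrightarrow> C \<noteq> C' \<and> C \<inter> C' \<noteq> {}"

end

(* Fix a clique C and a vertex x in C. Along a path from x, each edge lies in some clique
   and consecutive such cliques meet, so U_n(x) is covered by the cliques in U^cl_n(C);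
   conversely, a chain of cliques leaving C stays within U_(n+1)(x). If all degrees are at
   most v, a clique has at most v + 1 vertices and a vertex lies in at most 2^(v+1) cliques,
   hence #U_n(x) <= (v+1) #U^cl_n(C) <= (v+1) 2^(v+1) #U_(n+1)(x). Neither constant factors
   nor the shift from n to n + 1 change the limit of ln(#U_n)/ln n. *)

theory Submission
  imports Defs "HOL-Real_Asymp.Real_Asymp"
begin

section \<open>Growth exponents\<close>

lemma ln_ratio_tendsto_const_mult:
  fixes a :: "nat \<Rightarrow> real"
  assumes lim: "(\<lambda>n. ln (a n) / ln (real n)) \<longlonglongrightarrow> D"
    and c: "c > 0" and a_pos: "\<And>n. a n > 0"
  shows "(\<lambda>n. ln (c * a n) / ln (real n)) \<longlonglongrightarrow> D"
proof -
  have "filterlim (\<lambda>n::nat. ln (real n)) at_infinity sequentially"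
    by (rule filterlim_at_top_imp_at_infinity) real_asymp
  then have "(\<lambda>n. ln c / ln (real n)) \<longlonglongrightarrow> 0"
    by (rule tendsto_divide_0[OF tendsto_const])
  from tendsto_add[OF this lim] show ?thesis
    using c a_pos by (simp add: ln_mult_pos add_divide_distrib)
qed

lemma ln_ratio_tendsto_Suc:
  fixes a :: "nat \<Rightarrow> real"
  assumes lim: "(\<lambda>n. ln (a n) / ln (real n)) \<longlonglongrightarrow> D"
  shows "(\<lambda>n. ln (a (Suc n)) / ln (real n)) \<longlonglongrightarrow> D"
proof -
  have "(\<lambda>n. ln (a (Suc n)) / ln (real (Suc n))) \<longlonglongrightarrow> D"
    using LIMSEQ_Suc[OF lim] by simp
  moreover have "(\<lambda>n::nat. ln (real (Suc n)) / ln (real n)) \<longlonglongrightarrow> 1"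
    by real_asymp
  ultimately have "(\<lambda>n. ln (a (Suc n)) / ln (real (Suc n)) * (ln (real (Suc n)) / ln (real n)))
      \<longlonglongrightarrow> D"
    using tendsto_mult by fastforce
  moreover have "\<forall>\<^sub>F n in sequentially.
      ln (a (Suc n)) / ln (real (Suc n)) * (ln (real (Suc n)) / ln (real n))
      = ln (a (Suc n)) / ln (real n)"
    using eventually_ge_at_top[of 1] by eventually_elim simp
  ultimately show ?thesis
    by (rule Lim_transform_eventually)
qed

lemma ln_ratio_tendsto_comparable:
  fixes a b :: "nat \<Rightarrow> real"
  assumes lim: "(\<lambda>n. ln (a n) / ln (real n)) \<longlonglongrightarrow> D"
    and a_pos: "\<And>n. a n > 0" and b_pos: "\<And>n. b n > 0"
    and p: "p > 0" and q: "q > 0"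
    and a_le_b: "\<And>n. a n \<le> p * b n" and b_le_a: "\<And>n. b n \<le> q * a (Suc n)"
  shows "(\<lambda>n. ln (b n) / ln (real n)) \<longlonglongrightarrow> D"
proof (rule tendsto_sandwich)
  show "(\<lambda>n. ln (inverse p * a n) / ln (real n)) \<longlonglongrightarrow> D"
    using ln_ratio_tendsto_const_mult[OF lim] p a_pos by simp
  show "(\<lambda>n. ln (q * a (Suc n)) / ln (real n)) \<longlonglongrightarrow> D"
    using ln_ratio_tendsto_const_mult[OF ln_ratio_tendsto_Suc[OF lim]] q a_pos by simp
  show "\<forall>\<^sub>F n in sequentially. ln (inverse p * a n) / ln (real n) \<le> ln (b n) / ln (real n)"
    using eventually_ge_at_top[of 2]
  proof eventually_elim
    case (elim n)
    have "inverse p * a n \<le> b n"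
      using a_le_b[of n] p by (simp add: field_simps)
    then show ?case
      using elim p a_pos[of n] by (intro divide_right_mono ln_mono) auto
  qed
  show "\<forall>\<^sub>F n in sequentially. ln (b n) / ln (real n) \<le> ln (q * a (Suc n)) / ln (real n)"
    using eventually_ge_at_top[of 2]
  proof eventually_elim
    case (elim n)
    then show ?case
      using b_le_a[of n] b_pos[of n] by (intro divide_right_mono ln_mono) auto
  qed
qed

section \<open>Walks and balls\<close>

lemma walk_vertices: "walk V E x y n \<Longrightarrow> x \<in> V \<and> y \<in> V"
  by (induction rule: walk.induct) auto

lemma walk_append: "walk V E x z k \<Longrightarrow> walk V E z y m \<Longrightarrow> walk V E x y (k + m)"
  by (induction rule: walk.induct) (auto intro: walk.walk_step)

lemma walk_le_1:
  assumes "x \<in> V" "y \<in> V" "x = y \<or> E x y"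
  shows "\<exists>m\<le>1. walk V E x y m"
  using assms(3)
proof
  assume "x = y"
  then have "walk V E x y 0"
    using assms(2) by (simp add: walk.walk_refl)
  then show ?thesis
    by blast
next
  assume "E x y"
  then have "walk V E x y 1"
    using assms by (simp add: walk.walk_step walk.walk_refl)
  then show ?thesis
    by blast
qed

lemma gdist_le_enat_iff: "gdist V E x y \<le> enat n \<longleftrightarrow> (\<exists>m\<le>n. walk V E x y m)"
proof
  assume "gdist V E x y \<le> enat n"
  then have "(INF m \<in> {m. walk V E x y m}. enat m) < enat (Suc n)"
    unfolding gdist_def by (rule le_less_trans) simp
  then show "\<exists>m\<le>n. walk V E x y m"
    by (auto simp: INF_less_iff less_Suc_eq_le)
next
  assume "\<exists>m\<le>n. walk V E x y m"
  then obtain m where "m \<le> n" "walk V E x y m" by auto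
  then have "gdist V E x y \<le> enat m"
    unfolding gdist_def by (auto intro: INF_lower)
  with \<open>m \<le> n\<close> show "gdist V E x y \<le> enat n"
    by (meson enat_ord_simps(1) order_trans)
qed

lemma gball_eq_walks: "gball V E x n = {y. \<exists>m\<le>n. walk V E x y m}"
  unfolding gball_def gdist_le_enat_iff by (auto dest: walk_vertices)

lemma center_in_gball: "x \<in> V \<Longrightarrow> x \<in> gball V E x n"
  unfolding gball_eq_walks by (auto intro: walk.walk_refl)

lemma finite_gball:
  assumes "\<And>x. finite {y. E x y}"
  shows "finite (gball V E x n)"
proof (induction n arbitrary: x)
  case 0
  have "gball V E x 0 \<subseteq> {x}"
    unfolding gball_eq_walks by (auto elim: walk.cases)
  then show ?case
    using finite_subset by blast
next
  case (Suc n)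
  have "gball V E x (Suc n) \<subseteq> insert x (\<Union>z\<in>{z. E x z}. gball V E z n)"
  proof
    fix y
    assume "y \<in> gball V E x (Suc n)"
    then obtain m where "m \<le> Suc n" "walk V E x y m"
      unfolding gball_eq_walks by auto
    from \<open>walk V E x y m\<close> show "y \<in> insert x (\<Union>z\<in>{z. E x z}. gball V E z n)"
      using \<open>m \<le> Suc n\<close> unfolding gball_eq_walks by cases auto
  qed
  moreover have "finite (insert x (\<Union>z\<in>{z. E x z}. gball V E z n))"
    using Suc assms by auto
  ultimately show ?case
    using finite_subset by blast
qed

lemma card_gball_pos: "x \<in> V \<Longrightarrow> finite (gball V E x n) \<Longrightarrow> card (gball V E x n) > 0"
  using center_in_gball card_gt_0_iff by fastforce

section \<open>Cliques and the clique graph\<close>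

lemma complete_set_subset_closed_neighbourhood:
  "complete_set V E T \<Longrightarrow> y \<in> T \<Longrightarrow> T \<subseteq> insert y {z. E y z}"
  unfolding complete_set_def by auto

lemma clique_nonempty:
  assumes "V \<noteq> {}" "C \<in> cliques V E"
  shows "C \<noteq> {}"
proof
  assume "C = {}"
  obtain x where "x \<in> V"
    using assms(1) by blast
  then have "complete_set V E {x}"
    unfolding complete_set_def by simp
  with assms(2) \<open>C = {}\<close> show False
    unfolding cliques_def is_clique_def by blast
qed

lemma complete_set_walk_le_1:
  assumes "complete_set V E C" "x \<in> C" "y \<in> C"
  shows "\<exists>m\<le>1. walk V E x y m"
  using assms unfolding complete_set_def by (intro walk_le_1) auto

lemma clique_walk_imp_walk:
  assumes "walk (cliques V E) clique_adj C K m" "x \<in> C" "y \<in> K"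
  shows "\<exists>m'\<le>Suc m. walk V E x y m'"
  using assms
proof (induction arbitrary: x rule: walk.induct)
  case (walk_refl C)
  from \<open>C \<in> cliques V E\<close> have "complete_set V E C"
    unfolding cliques_def is_clique_def by blast
  from complete_set_walk_le_1[OF this walk_refl.prems]
  show ?case
    by (simp add: One_nat_def)
next
  case (walk_step C Z K m)
  from \<open>C \<in> cliques V E\<close> have "complete_set V E C"
    unfolding cliques_def is_clique_def by blast
  obtain z where "z \<in> C" "z \<in> Z"
    using \<open>clique_adj C Z\<close> unfolding clique_adj_def by blast
  obtain k where "k \<le> 1" "walk V E x z k"
    using complete_set_walk_le_1[OF \<open>complete_set V E C\<close> walk_step.prems(1) \<open>z \<in> C\<close>]
    by blast
  moreover obtain m' where "m' \<le> Suc m" "walk V E z y m'"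
    using walk_step.IH[OF \<open>z \<in> Z\<close> walk_step.prems(2)] by blast
  ultimately have "walk V E x y (k + m')" "k + m' \<le> Suc (Suc m)"
    using walk_append[of V E x z k y m'] by simp_all
  then show ?case
    by (intro exI[of _ "k + m'"]) simp
qed

lemma clique_gball_subset_gball:
  assumes "x \<in> C" "K \<in> gball (cliques V E) clique_adj C n"
  shows "K \<subseteq> gball V E x (Suc n)"
proof
  fix y
  assume "y \<in> K"
  obtain m where "m \<le> n" "walk (cliques V E) clique_adj C K m"
    using assms(2) unfolding gball_eq_walks by blast
  then obtain m' where "m' \<le> Suc m" "walk V E x y m'"
    using clique_walk_imp_walk[OF _ assms(1) \<open>y \<in> K\<close>] by blast
  moreover have "Suc m \<le> Suc n"
    using \<open>m \<le> n\<close> by simp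
  ultimately show "y \<in> gball V E x (Suc n)"
    unfolding gball_eq_walks by (blast intro: le_trans)
qed

locale degree_bounded_graph =
  fixes V :: "'a set" and E :: "'a \<Rightarrow> 'a \<Rightarrow> bool" and v :: nat
  assumes simple: "simple_graph V E"
    and degree_le: "\<And>x. x \<in> V \<Longrightarrow> finite {y. E x y} \<and> card {y. E x y} \<le> v"
begin

lemma neighbours_outside: "x \<notin> V \<Longrightarrow> {y. E x y} = {}"
  using simple unfolding simple_graph_def by auto

lemma finite_neighbours: "finite {y. E x y}"
  using degree_le neighbours_outside by (cases "x \<in> V") auto

lemma closed_neighbourhood_bounded:
  "finite (insert x {y. E x y}) \<and> card (insert x {y. E x y}) \<le> v + 1"
  using degree_le neighbours_outside
  by (cases "x \<in> V") (auto simp: card_insert_le_m1 finite_neighbours)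

lemma complete_set_bounded:
  assumes "complete_set V E T" "y \<in> T"
  shows "finite T \<and> card T \<le> v + 1"
  using complete_set_subset_closed_neighbourhood[OF assms] closed_neighbourhood_bounded[of y]
  by (meson card_mono finite_subset order_trans)

lemma complete_set_extends_to_clique:
  assumes S: "complete_set V E S" "y \<in> S"
  shows "\<exists>K \<in> cliques V E. S \<subseteq> K"
proof -
  let ?P = "\<lambda>T. complete_set V E T \<and> S \<subseteq> T"
  txt \<open>A complete superset of S of maximum cardinality is inclusion-maximal.\<close>
  have "\<exists>T. ?P T \<and> (\<forall>T'. ?P T' \<longrightarrow> card T' \<le> card T)"
  proof (rule ex_has_greatest_nat[of ?P S card "v + 2"])
    show "?P S"
      using S(1) by simp
    show "\<forall>T. ?P T \<longrightarrow> card T < v + 2"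
    proof (intro allI impI)
      fix T
      assume "?P T"
      then have "card T \<le> v + 1"
        using complete_set_bounded[of T y] S(2) by blast
      then show "card T < v + 2"
        by simp
    qed
  qed
  then obtain T where T: "?P T" and T_max: "\<And>T'. ?P T' \<Longrightarrow> card T' \<le> card T"
    by blast
  have "is_clique V E T"
    unfolding is_clique_def
  proof (intro conjI allI impI)
    show "complete_set V E T"
      using T by simp
    fix T'
    assume T': "complete_set V E T' \<and> T \<subseteq> T'"
    then have "finite T'"
      using complete_set_bounded[of T' y] T S(2) by blast
    moreover have "card T' \<le> card T"
      using T' T by (intro T_max) blast
    ultimately show "T' = T"
      using T' card_seteq[of T' T] by simp
  qed
  with T show ?thesis
    unfolding cliques_def by blast
qed

lemma cliques_containing_bounded:
  "finite {K \<in> cliques V E. y \<in> K} \<and> card {K \<in> cliques V E. y \<in> K} \<le> 2 ^ (v + 1)"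
proof -
  let ?N = "insert y {z. E y z}"
  have N: "finite ?N" "card ?N \<le> v + 1"
    using closed_neighbourhood_bounded by simp_all
  have sub: "{K \<in> cliques V E. y \<in> K} \<subseteq> Pow ?N"
  proof
    fix K
    assume "K \<in> {K \<in> cliques V E. y \<in> K}"
    then have "complete_set V E K" "y \<in> K"
      unfolding cliques_def is_clique_def by simp_all
    then show "K \<in> Pow ?N"
      using complete_set_subset_closed_neighbourhood by simp
  qed
  have "card (Pow ?N) = 2 ^ card ?N"
    using N(1) by (rule card_Pow)
  also have "\<dots> \<le> 2 ^ (v + 1)"
    using N(2) by (rule power_increasing) simp
  finally have "card (Pow ?N) \<le> 2 ^ (v + 1)" .
  moreover have "card {K \<in> cliques V E. y \<in> K} \<le> card (Pow ?N)"
    using sub N(1) by (intro card_mono) simp_all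
  moreover have "finite {K \<in> cliques V E. y \<in> K}"
    using sub N(1) finite_subset by blast
  ultimately show ?thesis
    by simp
qed

lemma walk_imp_clique_walk:
  assumes "walk V E x y m" "C \<in> cliques V E" "x \<in> C"
  shows "\<exists>K \<in> cliques V E. y \<in> K \<and> (\<exists>m'\<le>m. walk (cliques V E) clique_adj C K m')"
  using assms
proof (induction arbitrary: C rule: walk.induct)
  case (walk_refl x)
  then have "walk (cliques V E) clique_adj C C 0"
    by (simp add: walk.walk_refl)
  with walk_refl.prems show ?case
    by blast
next
  case (walk_step x z y n)
  have "complete_set V E {x, z}"
    using simple \<open>E x z\<close> unfolding simple_graph_def complete_set_def by auto
  then obtain K0 where K0: "K0 \<in> cliques V E" "x \<in> K0" "z \<in> K0"
    using complete_set_extends_to_clique[of "{x, z}" x] by auto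
  then obtain K m' where K: "K \<in> cliques V E" "y \<in> K" "m' \<le> n"
    "walk (cliques V E) clique_adj K0 K m'"
    using walk_step.IH by blast
  have "C = K0 \<or> clique_adj C K0"
    using K0(2) walk_step.prems(2) unfolding clique_adj_def by blast
  then obtain k where "k \<le> 1" "walk (cliques V E) clique_adj C K0 k"
    using walk_le_1[OF walk_step.prems(1) K0(1)] by blast
  with K have "walk (cliques V E) clique_adj C K (k + m')" "k + m' \<le> Suc n"
    using walk_append[of "cliques V E" clique_adj C K0 k K m'] by simp_all
  with K(1,2) show ?case
    by blast
qed

lemma gball_subset_Union_clique_gball:
  assumes "C \<in> cliques V E" "x \<in> C"
  shows "gball V E x n \<subseteq> \<Union> (gball (cliques V E) clique_adj C n)"
proof
  fix y
  assume "y \<in> gball V E x n"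
  then obtain m where "m \<le> n" "walk V E x y m"
    unfolding gball_eq_walks by blast
  obtain K m' where "K \<in> cliques V E" "y \<in> K" "m' \<le> m"
    "walk (cliques V E) clique_adj C K m'"
    using walk_imp_clique_walk[OF \<open>walk V E x y m\<close> assms] by blast
  moreover from \<open>m' \<le> m\<close> \<open>m \<le> n\<close> have "m' \<le> n"
    by (rule le_trans)
  ultimately show "y \<in> \<Union> (gball (cliques V E) clique_adj C n)"
    unfolding gball_eq_walks by blast
qed

lemma clique_gball_subset_cliques_containing:
  assumes "C \<in> cliques V E" "x \<in> C"
  shows "gball (cliques V E) clique_adj C n
    \<subseteq> (\<Union>y \<in> gball V E x (Suc n). {K \<in> cliques V E. y \<in> K})"
proof
  fix K
  assume K: "K \<in> gball (cliques V E) clique_adj C n"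
  then have "K \<in> cliques V E"
    unfolding gball_def by blast
  moreover have "x \<in> V"
    using assms unfolding cliques_def is_clique_def complete_set_def by blast
  ultimately obtain y where "y \<in> K"
    using clique_nonempty[of V K E] by blast
  moreover have "y \<in> gball V E x (Suc n)"
    using clique_gball_subset_gball[OF assms(2) K] \<open>y \<in> K\<close> by blast
  ultimately show "K \<in> (\<Union>y \<in> gball V E x (Suc n). {K \<in> cliques V E. y \<in> K})"
    using \<open>K \<in> cliques V E\<close> by blast
qed

lemma finite_clique_gball:
  assumes "C \<in> cliques V E" "x \<in> C"
  shows "finite (gball (cliques V E) clique_adj C n)"
  using clique_gball_subset_cliques_containing[OF assms]
    finite_gball[OF finite_neighbours] cliques_containing_bounded
  by (meson finite_UN_I finite_subset)

lemma card_gball_le_card_clique_gball: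
  assumes "C \<in> cliques V E" "x \<in> C"
  shows "card (gball V E x n) \<le> (v + 1) * card (gball (cliques V E) clique_adj C n)"
proof -
  let ?B = "gball (cliques V E) clique_adj C n"
  have "V \<noteq> {}"
    using assms unfolding cliques_def is_clique_def complete_set_def by auto
  have B_cliques: "finite K \<and> card K \<le> v + 1" if "K \<in> ?B" for K
  proof -
    have "K \<in> cliques V E"
      using that unfolding gball_def by blast
    then obtain y where "y \<in> K" "complete_set V E K"
      using clique_nonempty[OF \<open>V \<noteq> {}\<close>] unfolding cliques_def is_clique_def by blast
    then show ?thesis
      using complete_set_bounded by blast
  qed
  have "card (gball V E x n) \<le> card (\<Union> ?B)"
    using gball_subset_Union_clique_gball[OF assms] finite_clique_gball[OF assms] B_cliques
    by (intro card_mono) auto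
  also have "\<dots> \<le> (\<Sum>K \<in> ?B. card K)"
    by (rule card_Union_le_sum_card)
  also have "\<dots> \<le> (\<Sum>K \<in> ?B. v + 1)"
    using B_cliques by (intro sum_mono) auto
  finally show ?thesis
    by (simp add: mult.commute)
qed

lemma card_clique_gball_le_card_gball:
  assumes "C \<in> cliques V E" "x \<in> C"
  shows "card (gball (cliques V E) clique_adj C n) \<le> 2 ^ (v + 1) * card (gball V E x (Suc n))"
proof -
  let ?A = "gball V E x (Suc n)" and ?Cl = "\<lambda>y. {K \<in> cliques V E. y \<in> K}"
  have "finite ?A"
    by (rule finite_gball[OF finite_neighbours])
  then have "finite (\<Union>y \<in> ?A. ?Cl y)"
    using cliques_containing_bounded by blast
  then have "card (gball (cliques V E) clique_adj C n) \<le> card (\<Union>y \<in> ?A. ?Cl y)"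
    using clique_gball_subset_cliques_containing[OF assms] by (rule card_mono)
  also have "\<dots> \<le> (\<Sum>y \<in> ?A. card (?Cl y))"
    using \<open>finite ?A\<close> by (rule card_UN_le)
  also have "\<dots> \<le> (\<Sum>y \<in> ?A. 2 ^ (v + 1))"
    using cliques_containing_bounded by (intro sum_mono) blast
  finally show ?thesis
    by (simp add: mult.commute)
qed

end

theorem mainTheorem4:
  fixes V :: "'a set" and E :: "'a \<Rightarrow> 'a \<Rightarrow> bool" and D :: real
  assumes "simple_graph V E"
    and "infinite V"
    and "connected_graph V E"
    and "bounded_degree V E"
    and "has_scaling_dim V E D"
  shows "has_scaling_dim (cliques V E) clique_adj D"
proof -
  obtain v where "\<forall>x\<in>V. finite {y. E x y} \<and> card {y. E x y} \<le> v"
    using assms(4) unfolding bounded_degree_def by blast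
  with assms(1) interpret degree_bounded_graph V E v
    by unfold_locales auto
  show ?thesis
    unfolding has_scaling_dim_def Dn_def
  proof
    fix C
    assume C: "C \<in> cliques V E"
    obtain x where x: "x \<in> C"
      using clique_nonempty[OF _ C] assms(2) by blast
    then have "x \<in> V"
      using C unfolding cliques_def is_clique_def complete_set_def by blast
    let ?a = "\<lambda>n. card (gball V E x n)" and ?b = "\<lambda>n. card (gball (cliques V E) clique_adj C n)"
    show "(\<lambda>n. ln (real (?b n)) / ln (real n)) \<longlonglongrightarrow> D"
    proof (rule ln_ratio_tendsto_comparable[where p = "real (v + 1)" and q = "real (2 ^ (v + 1))"])
      show "(\<lambda>n. ln (real (?a n)) / ln (real n)) \<longlonglongrightarrow> D"
        using assms(5) \<open>x \<in> V\<close> unfolding has_scaling_dim_def Dn_def by blast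
      show "0 < real (?a n)" for n
        using card_gball_pos[OF \<open>x \<in> V\<close> finite_gball[OF finite_neighbours]] by simp
      show "0 < real (?b n)" for n
        using card_gball_pos[OF C finite_clique_gball[OF C x]] by simp
      show "real (?a n) \<le> real (v + 1) * real (?b n)" for n
        using card_gball_le_card_clique_gball[OF C x] by (simp only: of_nat_mult[symmetric] of_nat_le_iff)
      show "real (?b n) \<le> real (2 ^ (v + 1)) * real (?a (Suc n))" for n
        using card_clique_gball_le_card_gball[OF C x] by (simp only: of_nat_mult[symmetric] of_nat_le_iff)
    qed simp_all
  qed
qed

end
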